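(* Let $\mathcal{M}$ be a matroid on $[n]$, $J=J(\mathcal{M})$, and let $v$ be a vertex with $\{v\}$ independent in $\mathcal{M}$. Let $N\in G(J)$ with $x_v\mid N$. For every $\ell\ge1$ and every $L\in G\big(SF_\ell(J(\mathcal{M}/v):N)\big)$, we have $LN\in G(SF_{\ell+1}(J))$.
   Context: $R=\mathbb{K}[x_1,\ldots,x_n]$, $\mathbb{K}$ a field. For a matroid $\mathcal{N}$ on $E\subseteq[n]$, $J(\mathcal{N})=\bigcap_{F\in\mathcal{B}(\mathcal{N})}(x_i:i\in F)$, formed in $\mathbb{K}[x_i:i\in E]$ and extended to $R$. $\mathcal{M}/v$ is the contraction by $\{v\}$. $G(\cdot)$ denotes minimal monomial generators. For a squarefree monomial ideal $I$ with minimal primes $\mathfrak q_j$, $I^{(\ell)}=\bigcap\mathfrak q_j^\ell$ and $SF_\ell(I)$ is the ideal generated by the squarefree monomials in $I^{(\ell)}$. *)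

theory Defs
  imports Main
begin

text \<open>Monomials of R = K[x_1,...,x_n] are represented by exponent vectors
  (functions nat => nat supported in {1..n}). Every ideal occurring in the
  statement is a monomial ideal, which we represent by the set of monomials
  it contains (a monomial ideal is determined by this set, independently of K).\<close>

type_synonym monomial = "nat \<Rightarrow> nat"

definition is_mono :: "nat \<Rightarrow> monomial \<Rightarrow> bool" where
  "is_mono n m \<longleftrightarrow> (\<forall>i. m i \<noteq> 0 \<longrightarrow> i \<in> {1..n})"

definition mdvd :: "monomial \<Rightarrow> monomial \<Rightarrow> bool" where
  "mdvd a b \<longleftrightarrow> (\<forall>i. a i \<le> b i)"

definition mmult :: "monomial \<Rightarrow> monomial \<Rightarrow> monomial" where
  "mmult a b = (\<lambda>i. a i + b i)"

definition squarefree_mono :: "monomial \<Rightarrow> bool" where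
  "squarefree_mono m \<longleftrightarrow> (\<forall>i. m i \<le> 1)"

definition mingens :: "nat \<Rightarrow> monomial set \<Rightarrow> monomial set" where
  "mingens n I = {m. is_mono n m \<and> m \<in> I \<and>
      (\<forall>m'. is_mono n m' \<and> m' \<in> I \<and> mdvd m' m \<longrightarrow> m' = m)}"

definition prime_mon :: "nat \<Rightarrow> nat set \<Rightarrow> monomial set" where
  "prime_mon n C = {m. is_mono n m \<and> (\<exists>i\<in>C. m i \<noteq> 0)}"

definition prime_pow_mon :: "nat \<Rightarrow> nat set \<Rightarrow> nat \<Rightarrow> monomial set" where
  "prime_pow_mon n C l = {m. is_mono n m \<and> (\<Sum>i\<in>C. m i) \<ge> l}"

text \<open>Minimal primes of a monomial ideal: the minimal monomial primes containing it.\<close>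
definition min_prime_sets :: "nat \<Rightarrow> monomial set \<Rightarrow> nat set set" where
  "min_prime_sets n I = {C. C \<subseteq> {1..n} \<and> I \<subseteq> prime_mon n C \<and>
      (\<forall>D. D \<subseteq> C \<and> I \<subseteq> prime_mon n D \<longrightarrow> D = C)}"

definition symb_pow :: "nat \<Rightarrow> nat \<Rightarrow> monomial set \<Rightarrow> monomial set" where
  "symb_pow n l I = {m. is_mono n m \<and> (\<forall>C\<in>min_prime_sets n I. m \<in> prime_pow_mon n C l)}"

definition SF :: "nat \<Rightarrow> nat \<Rightarrow> monomial set \<Rightarrow> monomial set" where
  "SF n l I = {m. is_mono n m \<and>
      (\<exists>s. s \<in> symb_pow n l I \<and> squarefree_mono s \<and> mdvd s m)}"

definition colon :: "nat \<Rightarrow> monomial set \<Rightarrow> monomial \<Rightarrow> monomial set" where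
  "colon n I N = {m. is_mono n m \<and> mmult m N \<in> I}"

definition matroid_bases :: "nat set \<Rightarrow> nat set set \<Rightarrow> bool" where
  "matroid_bases E B \<longleftrightarrow> finite E \<and> B \<noteq> {} \<and> (\<forall>F\<in>B. F \<subseteq> E) \<and>
     (\<forall>F1\<in>B. \<forall>F2\<in>B. \<forall>x\<in>F1 - F2. \<exists>y\<in>F2 - F1. insert y (F1 - {x}) \<in> B)"

definition indep :: "nat set set \<Rightarrow> nat set \<Rightarrow> bool" where
  "indep B X \<longleftrightarrow> (\<exists>F\<in>B. X \<subseteq> F)"

text \<open>Bases of the contraction M/v (if v is a loop, M/v = M \ v has the same bases).\<close>
definition contract_bases :: "nat set set \<Rightarrow> nat \<Rightarrow> nat set set" where
  "contract_bases B v = (if (\<exists>F\<in>B. v \<in> F) then {F - {v} | F. F \<in> B \<and> v \<in> F} else B)"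

text \<open>J(M) = intersection over bases F of (x_i : i in F), extended to R.\<close>
definition Jm :: "nat \<Rightarrow> nat set set \<Rightarrow> monomial set" where
  "Jm n B = {m. is_mono n m \<and> (\<forall>F\<in>B. \<exists>i\<in>F. m i \<noteq> 0)}"

end

theory Submission
  imports Defs
begin

text \<open>Write x_S for the squarefree monomial with support S, and say that T covers a family A
  l times if T meets every member of A in at least l elements. The minimal primes of J(A) are the
  ideals (x_i : i \<in> X) for the inclusion-minimal X \<in> A, so x_T lies in J(A)^(l) iff T covers A
  l times, and the minimal generators of SF_l(J(A)) are the x_T for the minimal such T. A minimal
  generator N = x_C of J(M) is a minimal transversal of the bases, so every c \<in> C has a base F
  with F \<inter> C = {c}; in particular v is not a loop, and J(M/v) : N = J(A) for the family A of the
  sets F - {v}, F a base with F \<inter> C = {v}.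

  It remains to see that T \<union> C minimally covers the bases l + 1 times whenever T minimally
  covers A l times. Basis exchange against a base meeting C only in v moves any base to one
  meeting C only in v without enlarging its intersection with T \<union> C, and such a base meets
  T \<union> C in v and in at least l elements of T. For minimality, dropping t \<in> T is witnessed by
  the minimality of T, and dropping c \<in> C by the base obtained from a base F with F \<inter> C = {v}
  and |(F - {v}) \<inter> T| \<le> l by exchanging v for c.\<close>

definition monomial_of_set :: "nat set \<Rightarrow> monomial" where
  "monomial_of_set S = (\<lambda>i. of_bool (i \<in> S))"

lemma squarefree_mono_eq_monomial_of_set:
  "squarefree_mono m \<Longrightarrow> m = monomial_of_set {i. m i \<noteq> 0}"
proof (rule ext)
  fix i assume "squarefree_mono m"
  then have "m i \<le> 1" unfolding squarefree_mono_def by blast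
  then show "m i = monomial_of_set {i. m i \<noteq> 0} i"
    unfolding monomial_of_set_def by (cases "m i") auto
qed

lemma is_mono_monomial_of_set: "S \<subseteq> {1..n} \<Longrightarrow> is_mono n (monomial_of_set S)"
  unfolding is_mono_def monomial_of_set_def by auto

lemma squarefree_monomial_of_set: "squarefree_mono (monomial_of_set S)"
  by (simp add: squarefree_mono_def monomial_of_set_def)

lemma mdvd_monomial_of_set_iff: "mdvd (monomial_of_set A) (monomial_of_set B) \<longleftrightarrow> A \<subseteq> B"
  unfolding mdvd_def monomial_of_set_def by auto

lemma monomial_of_set_inject: "monomial_of_set A = monomial_of_set B \<longleftrightarrow> A = B"
  unfolding monomial_of_set_def by (auto simp: fun_eq_iff)

lemma mmult_monomial_of_set:
  "A \<inter> B = {} \<Longrightarrow> mmult (monomial_of_set A) (monomial_of_set B) = monomial_of_set (A \<union> B)"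
  unfolding mmult_def monomial_of_set_def by (auto simp: fun_eq_iff)

lemma mdvd_trans: "mdvd a b \<Longrightarrow> mdvd b c \<Longrightarrow> mdvd a c"
  unfolding mdvd_def using le_trans by blast

lemma mdvd_antisym: "mdvd a b \<Longrightarrow> mdvd b a \<Longrightarrow> a = b"
  unfolding mdvd_def by (simp add: fun_eq_iff le_antisym)

definition covers :: "nat set set \<Rightarrow> nat \<Rightarrow> nat set \<Rightarrow> bool" where
  "covers A l T \<longleftrightarrow> (\<forall>X\<in>A. l \<le> card (X \<inter> T))"

definition minimal_cover :: "nat set set \<Rightarrow> nat \<Rightarrow> nat set \<Rightarrow> bool" where
  "minimal_cover A l T \<longleftrightarrow> covers A l T \<and> (\<forall>T'\<subseteq>T. covers A l T' \<longrightarrow> T' = T)"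

lemma minimal_cover_iff:
  assumes "\<forall>X\<in>A. finite X"
  shows "minimal_cover A l T \<longleftrightarrow> covers A l T \<and> (\<forall>t\<in>T. \<exists>X\<in>A. card (X \<inter> (T - {t})) < l)"
proof
  assume T: "minimal_cover A l T"
  have "\<not> covers A l (T - {t})" if "t \<in> T" for t
    using T that unfolding minimal_cover_def by blast
  then show "covers A l T \<and> (\<forall>t\<in>T. \<exists>X\<in>A. card (X \<inter> (T - {t})) < l)"
    using T unfolding minimal_cover_def covers_def by (meson not_le)
next
  assume T: "covers A l T \<and> (\<forall>t\<in>T. \<exists>X\<in>A. card (X \<inter> (T - {t})) < l)"
  have "T' = T" if T': "T' \<subseteq> T" "covers A l T'" for T'
  proof (rule ccontr)
    assume "T' \<noteq> T"
    then obtain t where "t \<in> T" "T' \<subseteq> T - {t}" using T'(1) by blast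
    then obtain X where X: "X \<in> A" "card (X \<inter> (T - {t})) < l" using T by blast
    have "card (X \<inter> T') \<le> card (X \<inter> (T - {t}))"
      using X(1) assms \<open>T' \<subseteq> T - {t}\<close> by (intro card_mono) auto
    then show False using X T'(2) unfolding covers_def by fastforce
  qed
  then show "minimal_cover A l T" using T unfolding minimal_cover_def by blast
qed

lemma minimal_cover_subset_Union: "minimal_cover A l T \<Longrightarrow> T \<subseteq> \<Union>A"
proof
  fix t assume T: "minimal_cover A l T" and "t \<in> T"
  show "t \<in> \<Union>A"
  proof (rule ccontr)
    assume "t \<notin> \<Union>A"
    then have "X \<inter> (T - {t}) = X \<inter> T" if "X \<in> A" for X using that by blast
    then have "covers A l (T - {t})" using T unfolding minimal_cover_def covers_def by simp
    then show False using T \<open>t \<in> T\<close> unfolding minimal_cover_def by blast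
  qed
qed

lemma min_prime_sets_Jm_subset:
  assumes "P \<in> min_prime_sets n (Jm n A)" and "\<forall>X\<in>A. X \<subseteq> {1..n}"
  shows "P \<in> A"
proof -
  have P: "P \<subseteq> {1..n}" "Jm n A \<subseteq> prime_mon n P"
    and minimal: "\<And>D. D \<subseteq> P \<Longrightarrow> Jm n A \<subseteq> prime_mon n D \<Longrightarrow> D = P"
    using assms(1) unfolding min_prime_sets_def by auto
  have "\<exists>X\<in>A. X \<subseteq> P"
  proof (rule ccontr)
    assume none: "\<not> (\<exists>X\<in>A. X \<subseteq> P)"
    have "monomial_of_set ({1..n} - P) \<in> Jm n A"
      using none assms(2) is_mono_monomial_of_set[of "{1..n} - P" n]
      unfolding Jm_def monomial_of_set_def by fastforce
    with P(2) show False
      unfolding prime_mon_def monomial_of_set_def by auto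
  qed
  then obtain X where "X \<in> A" "X \<subseteq> P" by blast
  moreover have "Jm n A \<subseteq> prime_mon n X"
    using \<open>X \<in> A\<close> unfolding Jm_def prime_mon_def by auto
  ultimately show ?thesis using minimal by metis
qed

lemma ex_min_prime_sets_Jm_subset:
  assumes "X \<in> A" and "X \<subseteq> {1..n}"
  shows "\<exists>P\<in>min_prime_sets n (Jm n A). P \<subseteq> X"
proof -
  let ?Q = "{D. D \<subseteq> X \<and> Jm n A \<subseteq> prime_mon n D}"
  have "X \<in> ?Q" using assms(1) unfolding Jm_def prime_mon_def by auto
  then obtain D where D: "D \<in> ?Q" and least: "\<And>D'. D' \<in> ?Q \<Longrightarrow> card D \<le> card D'"
    using ex_has_least_nat[of "\<lambda>D. D \<in> ?Q" X card] by blast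
  have Dn: "D \<subseteq> {1..n}" using D assms(2) by auto
  then have "finite D" using finite_subset by blast
  moreover have "D' = D" if "D' \<subseteq> D" "Jm n A \<subseteq> prime_mon n D'" for D'
    using card_seteq[OF \<open>finite D\<close> that(1)] least[of D'] that D by auto
  ultimately have "D \<in> min_prime_sets n (Jm n A)"
    using D Dn unfolding min_prime_sets_def by auto
  then show ?thesis using D by auto
qed

lemma monomial_of_set_in_symb_pow_Jm_iff:
  assumes "\<forall>X\<in>A. X \<subseteq> {1..n}" and "S \<subseteq> {1..n}"
  shows "monomial_of_set S \<in> symb_pow n l (Jm n A) \<longleftrightarrow> covers A l S"
proof -
  have card_eq: "(\<Sum>i\<in>P. monomial_of_set S i) = card (P \<inter> S)"
    if "P \<in> min_prime_sets n (Jm n A)" for P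
  proof -
    have "finite P" using that finite_subset unfolding min_prime_sets_def by auto
    then show ?thesis unfolding monomial_of_set_def by simp
  qed
  have "(\<forall>P\<in>min_prime_sets n (Jm n A). l \<le> card (P \<inter> S)) \<longleftrightarrow> covers A l S"
  proof
    assume "\<forall>P\<in>min_prime_sets n (Jm n A). l \<le> card (P \<inter> S)"
    moreover have "card (P \<inter> S) \<le> card (X \<inter> S)" if "X \<in> A" "P \<subseteq> X" for X P
      using that assms(1) by (intro card_mono) (auto intro: rev_finite_subset)
    ultimately show "covers A l S"
      unfolding covers_def using assms(1) ex_min_prime_sets_Jm_subset le_trans by metis
  qed (use assms(1) min_prime_sets_Jm_subset in \<open>auto simp: covers_def\<close>)
  then show ?thesis
    using is_mono_monomial_of_set[OF assms(2)] card_eq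
    unfolding symb_pow_def prime_pow_mon_def by simp
qed

lemma SF_squarefree_divisor:
  assumes "m \<in> SF n l I"
  obtains S where "S \<subseteq> {1..n}" "monomial_of_set S \<in> symb_pow n l I" "mdvd (monomial_of_set S) m"
proof -
  obtain s where s: "s \<in> symb_pow n l I" "squarefree_mono s" "mdvd s m"
    using assms unfolding SF_def by blast
  then have "{i. s i \<noteq> 0} \<subseteq> {1..n}"
    unfolding symb_pow_def is_mono_def by auto
  then show ?thesis
    using that s squarefree_mono_eq_monomial_of_set[OF s(2)] by metis
qed

lemma monomial_of_set_in_SF:
  "monomial_of_set S \<in> symb_pow n l I \<Longrightarrow> monomial_of_set S \<in> SF n l I"
  unfolding SF_def symb_pow_def by (auto simp: squarefree_monomial_of_set mdvd_def)

lemma mingens_SF_Jm_iff: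
  assumes "\<forall>X\<in>A. X \<subseteq> {1..n}"
  shows "L \<in> mingens n (SF n l (Jm n A)) \<longleftrightarrow>
    (\<exists>T\<subseteq>{1..n}. L = monomial_of_set T \<and> minimal_cover A l T)"
    (is "?gen \<longleftrightarrow> _")
proof
  assume ?gen
  then have L: "L \<in> SF n l (Jm n A)"
    and L_min: "\<And>m. is_mono n m \<Longrightarrow> m \<in> SF n l (Jm n A) \<Longrightarrow> mdvd m L \<Longrightarrow> m = L"
    unfolding mingens_def by auto
  have divisor_eq: "monomial_of_set S = L"
    if "S \<subseteq> {1..n}" "covers A l S" "mdvd (monomial_of_set S) L" for S
    using that L_min is_mono_monomial_of_set monomial_of_set_in_SF
      monomial_of_set_in_symb_pow_Jm_iff[OF assms] by metis
  obtain T where T: "T \<subseteq> {1..n}" "monomial_of_set T \<in> symb_pow n l (Jm n A)"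
      "mdvd (monomial_of_set T) L"
    using SF_squarefree_divisor[OF L] by blast
  have "covers A l T"
    using T monomial_of_set_in_symb_pow_Jm_iff[OF assms] by blast
  moreover have "L = monomial_of_set T"
    using divisor_eq T \<open>covers A l T\<close> by metis
  moreover have "T' = T" if "T' \<subseteq> T" "covers A l T'" for T'
    using divisor_eq[of T'] that T \<open>L = monomial_of_set T\<close>
    by (simp add: mdvd_monomial_of_set_iff monomial_of_set_inject)
  ultimately show "\<exists>T\<subseteq>{1..n}. L = monomial_of_set T \<and> minimal_cover A l T"
    using T(1) unfolding minimal_cover_def by blast
next
  assume "\<exists>T\<subseteq>{1..n}. L = monomial_of_set T \<and> minimal_cover A l T"
  then obtain T where T: "T \<subseteq> {1..n}" "L = monomial_of_set T" "covers A l T"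
    and T_min: "\<And>T'. T' \<subseteq> T \<Longrightarrow> covers A l T' \<Longrightarrow> T' = T"
    unfolding minimal_cover_def by blast
  have L: "L \<in> SF n l (Jm n A)"
    using T monomial_of_set_in_SF monomial_of_set_in_symb_pow_Jm_iff[OF assms] by metis
  have "m = L" if m: "m \<in> SF n l (Jm n A)" "mdvd m L" for m
  proof -
    obtain S where S: "S \<subseteq> {1..n}" "monomial_of_set S \<in> symb_pow n l (Jm n A)"
        "mdvd (monomial_of_set S) m"
      using SF_squarefree_divisor[OF m(1)] by blast
    have "S \<subseteq> T"
      using mdvd_trans[OF S(3) m(2)] T(2) by (simp add: mdvd_monomial_of_set_iff)
    moreover have "covers A l S"
      using S monomial_of_set_in_symb_pow_Jm_iff[OF assms] by blast
    ultimately have "S = T" using T_min by blast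
    then show "m = L" using S(3) m(2) T(2) mdvd_antisym by blast
  qed
  then show ?gen
    using L T is_mono_monomial_of_set unfolding mingens_def by blast
qed

lemma monomial_of_set_in_Jm_iff:
  "S \<subseteq> {1..n} \<Longrightarrow> monomial_of_set S \<in> Jm n A \<longleftrightarrow> (\<forall>X\<in>A. X \<inter> S \<noteq> {})"
  using is_mono_monomial_of_set unfolding Jm_def monomial_of_set_def by auto

lemma mingens_Jm:
  assumes "N \<in> mingens n (Jm n B)"
  obtains C where "C \<subseteq> {1..n}" "N = monomial_of_set C"
    "\<forall>F\<in>B. F \<inter> C \<noteq> {}" "\<forall>c\<in>C. \<exists>F\<in>B. F \<inter> C = {c}"
proof -
  define C where "C = {i. N i \<noteq> 0}"
  have N: "is_mono n N" "N \<in> Jm n B"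
    and N_min: "\<And>m. is_mono n m \<Longrightarrow> m \<in> Jm n B \<Longrightarrow> mdvd m N \<Longrightarrow> m = N"
    using assms unfolding mingens_def by auto
  have Cn: "C \<subseteq> {1..n}" using N(1) unfolding is_mono_def C_def by auto
  have meets: "\<forall>F\<in>B. F \<inter> C \<noteq> {}" using N(2) unfolding Jm_def C_def by auto
  have divides: "mdvd (monomial_of_set S) N" if "S \<subseteq> C" for S
    using that unfolding mdvd_def monomial_of_set_def C_def by auto
  have "monomial_of_set C \<in> Jm n B"
    using Cn meets by (simp add: monomial_of_set_in_Jm_iff)
  then have N_eq: "N = monomial_of_set C"
    using N_min[OF is_mono_monomial_of_set[OF Cn]] divides by blast
  have "\<exists>F\<in>B. F \<inter> C = {c}" if c: "c \<in> C" for c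
  proof -
    have "monomial_of_set (C - {c}) \<noteq> monomial_of_set C"
      using c by (auto simp: monomial_of_set_inject)
    moreover have "is_mono n (monomial_of_set (C - {c}))"
      using Cn by (intro is_mono_monomial_of_set) auto
    ultimately have "monomial_of_set (C - {c}) \<notin> Jm n B"
      using N_min divides[of "C - {c}"] N_eq by auto
    moreover have "C - {c} \<subseteq> {1..n}" using Cn by blast
    ultimately obtain F where F: "F \<in> B" "F \<inter> (C - {c}) = {}"
      by (auto simp: monomial_of_set_in_Jm_iff)
    then have "F \<inter> C = {c}" using meets by auto
    then show ?thesis using F(1) by blast
  qed
  then show ?thesis using that Cn N_eq meets by blast
qed

definition private_bases :: "nat set set \<Rightarrow> nat set \<Rightarrow> nat \<Rightarrow> nat set set" where
  "private_bases B C v = (\<lambda>F. F - {v}) ` {F \<in> B. F \<inter> C = {v}}"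

lemma colon_Jm_contract_bases:
  assumes "C \<subseteq> {1..n}" "v \<in> C" "\<exists>F\<in>B. F \<inter> C = {v}"
  shows "colon n (Jm n (contract_bases B v)) (monomial_of_set C) = Jm n (private_bases B C v)"
proof -
  have contract: "contract_bases B v = (\<lambda>F. F - {v}) ` {F \<in> B. v \<in> F}"
    using assms(3) unfolding contract_bases_def by auto
  have mono: "is_mono n (mmult m (monomial_of_set C)) \<longleftrightarrow> is_mono n m" for m
    using assms(1) unfolding is_mono_def mmult_def monomial_of_set_def by auto
  \<comment> \<open>x_C alone already meets every base through v that meets C - {v}\<close>
  have meets: "(v \<in> F \<longrightarrow> (\<exists>i\<in>F - {v}. mmult m (monomial_of_set C) i \<noteq> 0)) \<longleftrightarrow>
      (F \<inter> C = {v} \<longrightarrow> (\<exists>i\<in>F - {v}. m i \<noteq> 0))" for F m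
    using assms(2) unfolding mmult_def monomial_of_set_def by auto
  show ?thesis
  proof (rule set_eqI)
    fix m
    have "m \<in> colon n (Jm n (contract_bases B v)) (monomial_of_set C) \<longleftrightarrow>
        is_mono n m \<and> (\<forall>F\<in>B. v \<in> F \<longrightarrow> (\<exists>i\<in>F - {v}. mmult m (monomial_of_set C) i \<noteq> 0))"
      unfolding colon_def Jm_def contract by (simp add: mono, blast)
    also have "\<dots> \<longleftrightarrow> is_mono n m \<and> (\<forall>F\<in>B. F \<inter> C = {v} \<longrightarrow> (\<exists>i\<in>F - {v}. m i \<noteq> 0))"
      by (simp only: meets)
    also have "\<dots> \<longleftrightarrow> m \<in> Jm n (private_bases B C v)"
      unfolding Jm_def private_bases_def by auto
    finally show "m \<in> colon n (Jm n (contract_bases B v)) (monomial_of_set C) \<longleftrightarrow>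
        m \<in> Jm n (private_bases B C v)" .
  qed
qed

lemma matroid_bases_finite:
  assumes "matroid_bases E B" "F \<in> B"
  shows "finite F"
proof -
  have "F \<subseteq> E" "finite E" using assms unfolding matroid_bases_def by auto
  then show ?thesis by (rule finite_subset)
qed

lemma matroid_bases_exchange:
  "matroid_bases E B \<Longrightarrow> F1 \<in> B \<Longrightarrow> F2 \<in> B \<Longrightarrow> x \<in> F1 - F2 \<Longrightarrow>
    \<exists>y\<in>F2 - F1. insert y (F1 - {x}) \<in> B"
  unfolding matroid_bases_def by blast

lemma card_Int_Un_private:
  assumes "finite F" "F \<inter> C = {v}" "T \<inter> C = {}"
  shows "card (F \<inter> (T \<union> C)) = Suc (card ((F - {v}) \<inter> T))"
proof -
  have "F \<inter> (T \<union> C) = insert v ((F - {v}) \<inter> T)" using assms(2,3) by blast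
  moreover have "v \<notin> (F - {v}) \<inter> T" by blast
  ultimately show ?thesis using assms(1) by simp
qed

lemma exchange_private_element:
  assumes "matroid_bases E B" "\<forall>F\<in>B. F \<inter> C \<noteq> {}"
    and "F \<in> B" "F \<inter> C = {v}" and "F0 \<in> B" "F0 \<inter> C = {e}"
  shows "insert e (F - {v}) \<in> B"
proof (cases "e = v")
  case True
  have "v \<in> F" using assms(4) by auto
  then show ?thesis using True assms(3) by (simp add: insert_absorb)
next
  case False
  have "v \<in> F" "v \<in> C" using assms(4) by auto
  then have "v \<in> F - F0" using False assms(6) by auto
  then obtain y where y: "y \<in> F0 - F" "insert y (F - {v}) \<in> B"
    using matroid_bases_exchange[OF assms(1,3,5)] by blast
  have "insert y (F - {v}) \<inter> C \<noteq> {}" using assms(2) y(2) by blast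
  then have "y \<in> C" using assms(4) by auto
  then have "y = e" using y(1) assms(6) by auto
  then show ?thesis using y(2) by simp
qed

(* Each exchange trades an element of F \<inter> C - {v} for one of F0, so |F - F0| decreases while
   |F \<inter> S| does not grow. *)
lemma ex_private_base_card_le:
  assumes "matroid_bases E B" "\<forall>F\<in>B. F \<inter> C \<noteq> {}" "F0 \<in> B" "F0 \<inter> C = {v}" "C \<subseteq> S"
    and "F \<in> B"
  shows "\<exists>F'\<in>B. F' \<inter> C = {v} \<and> card (F' \<inter> S) \<le> card (F \<inter> S)"
  using assms(6)
proof (induction "card (F - F0)" arbitrary: F rule: less_induct)
  case less
  show ?case
  proof (cases "F \<inter> C = {v}")
    case False
    then obtain x where x: "x \<in> F" "x \<in> C" "x \<noteq> v" using assms(2) less.prems by blast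
    then have "x \<in> F - F0" using assms(4) by blast
    then obtain y where y: "y \<in> F0 - F" "insert y (F - {x}) \<in> B"
      using matroid_bases_exchange[OF assms(1) less.prems assms(3)] by blast
    let ?F1 = "insert y (F - {x})"
    have finF: "finite F" using matroid_bases_finite[OF assms(1) less.prems] .
    have "card ((F - F0) - {x}) < card (F - F0)"
      using \<open>x \<in> F - F0\<close> finF by (intro card_Diff1_less) auto
    moreover have "?F1 - F0 = (F - F0) - {x}" using y by blast
    ultimately have "card (?F1 - F0) < card (F - F0)" by simp
    then obtain F' where F': "F' \<in> B" "F' \<inter> C = {v}" "card (F' \<inter> S) \<le> card (?F1 \<inter> S)"
      using less.hyps y(2) by blast
    have "?F1 \<inter> S \<subseteq> insert y ((F \<inter> S) - {x})" by blast
    then have "card (?F1 \<inter> S) \<le> card (insert y ((F \<inter> S) - {x}))"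
      using finF by (intro card_mono) auto
    also have "\<dots> \<le> Suc (card ((F \<inter> S) - {x}))"
      using finF by (simp add: card_insert_if)
    also have "\<dots> = card (F \<inter> S)"
      using x assms(5) finF by (intro card_Suc_Diff1) auto
    finally show ?thesis using F' by (meson le_trans)
  next
    case True
    then show ?thesis using less.prems by blast
  qed
qed

lemma minimal_cover_private_bases_disjoint:
  "minimal_cover (private_bases B C v) l T \<Longrightarrow> T \<inter> C = {}"
  using minimal_cover_subset_Union unfolding private_bases_def by blast

lemma covers_Un_of_covers_private_bases:
  assumes B: "matroid_bases E B" and meets: "\<forall>F\<in>B. F \<inter> C \<noteq> {}"
    and F0: "F0 \<in> B" "F0 \<inter> C = {v}"
    and TC: "T \<inter> C = {}" and T: "covers (private_bases B C v) l T"
  shows "covers B (Suc l) (T \<union> C)"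
  unfolding covers_def
proof
  fix F assume "F \<in> B"
  then obtain F' where F': "F' \<in> B" "F' \<inter> C = {v}" "card (F' \<inter> (T \<union> C)) \<le> card (F \<inter> (T \<union> C))"
    using ex_private_base_card_le[OF B meets F0] by blast
  have "F' - {v} \<in> private_bases B C v"
    using F'(1,2) unfolding private_bases_def by blast
  then have "l \<le> card ((F' - {v}) \<inter> T)"
    using T unfolding covers_def by blast
  moreover have "card (F' \<inter> (T \<union> C)) = Suc (card ((F' - {v}) \<inter> T))"
    using card_Int_Un_private[OF matroid_bases_finite[OF B F'(1)] F'(2) TC] .
  ultimately show "Suc l \<le> card (F \<inter> (T \<union> C))" using F'(3) by linarith
qed

lemma minimal_cover_private_bases_Un:
  assumes B: "matroid_bases E B" and meets: "\<forall>F\<in>B. F \<inter> C \<noteq> {}"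
    and has_private: "\<forall>c\<in>C. \<exists>F\<in>B. F \<inter> C = {c}"
    and "v \<in> C" "1 \<le> l" and T: "minimal_cover (private_bases B C v) l T"
  shows "minimal_cover B (Suc l) (T \<union> C)"
proof -
  let ?A = "private_bases B C v"
  have finB: "\<forall>F\<in>B. finite F" using matroid_bases_finite[OF B] by blast
  then have finA: "\<forall>X\<in>?A. finite X" unfolding private_bases_def by blast
  have TC: "T \<inter> C = {}" using minimal_cover_private_bases_disjoint[OF T] .
  have T_covers: "covers ?A l T" and T_tight: "\<forall>t\<in>T. \<exists>X\<in>?A. card (X \<inter> (T - {t})) < l"
    using T minimal_cover_iff[OF finA] by blast+
  obtain F0 where F0: "F0 \<in> B" "F0 \<inter> C = {v}" using has_private \<open>v \<in> C\<close> by blast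
  have "\<exists>F\<in>B. card (F \<inter> (T \<union> C - {e})) < Suc l" if e: "e \<in> T \<union> C" for e
  proof (cases "e \<in> T")
    case True
    then obtain F where F: "F \<in> B" "F \<inter> C = {v}" "card ((F - {v}) \<inter> (T - {e})) < l"
      using T_tight unfolding private_bases_def by blast
    have "T \<union> C - {e} = (T - {e}) \<union> C" using True TC by blast
    then have "card (F \<inter> (T \<union> C - {e})) = Suc (card ((F - {v}) \<inter> (T - {e})))"
      using card_Int_Un_private[OF _ F(2), of "T - {e}"] finB F(1) TC by auto
    then show ?thesis using F(1,3) by (intro bexI[of _ F]) simp_all
  next
    case False
    then have "e \<in> C" using e by blast
    then obtain Fe where Fe: "Fe \<in> B" "Fe \<inter> C = {e}" using has_private by blast
    have "F0 - {v} \<in> ?A" using F0 unfolding private_bases_def by blast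
    then have "T \<noteq> {}" using T_covers \<open>1 \<le> l\<close> unfolding covers_def by fastforce
    then obtain t where "t \<in> T" by blast
    then obtain F where F: "F \<in> B" "F \<inter> C = {v}" "card ((F - {v}) \<inter> (T - {t})) < l"
      using T_tight unfolding private_bases_def by blast
    have "card ((F - {v}) \<inter> T) \<le> Suc (card ((F - {v}) \<inter> T - {t}))"
      using finB F(1) by (cases "t \<in> (F - {v}) \<inter> T") (simp_all add: card_Suc_Diff1)
    also have "(F - {v}) \<inter> T - {t} = (F - {v}) \<inter> (T - {t})" by blast
    finally have "card ((F - {v}) \<inter> T) \<le> l" using F(3) by linarith
    moreover have "insert e (F - {v}) \<inter> (T \<union> C - {e}) \<subseteq> (F - {v}) \<inter> T"
      using F(2) by blast
    then have "card (insert e (F - {v}) \<inter> (T \<union> C - {e})) \<le> card ((F - {v}) \<inter> T)"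
      using finB F(1) by (intro card_mono) auto
    moreover have "insert e (F - {v}) \<in> B"
      using exchange_private_element[OF B meets F(1,2) Fe] .
    ultimately show ?thesis by (intro bexI[of _ "insert e (F - {v})"]) auto
  qed
  then show ?thesis
    using covers_Un_of_covers_private_bases[OF B meets F0 TC T_covers] minimal_cover_iff finB
    by blast
qed

theorem corollary4p15:
  fixes n v l :: nat and B :: "nat set set" and N L :: monomial
  assumes "matroid_bases {1..n} B"
    and "indep B {v}"
    and "N \<in> mingens n (Jm n B)"
    and "N v \<noteq> 0"
    and "l \<ge> 1"
    and "L \<in> mingens n (SF n l (colon n (Jm n (contract_bases B v)) N))"
  shows "mmult L N \<in> mingens n (SF n (l + 1) (Jm n B))"
proof -
  have Bn: "\<forall>F\<in>B. F \<subseteq> {1..n}" using assms(1) unfolding matroid_bases_def by blast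
  obtain C where C: "C \<subseteq> {1..n}" "N = monomial_of_set C"
      "\<forall>F\<in>B. F \<inter> C \<noteq> {}" "\<forall>c\<in>C. \<exists>F\<in>B. F \<inter> C = {c}"
    using mingens_Jm[OF assms(3)] by blast
  have "v \<in> C" using assms(4) C(2) by (simp add: monomial_of_set_def)
  have An: "\<forall>X\<in>private_bases B C v. X \<subseteq> {1..n}" using Bn unfolding private_bases_def by blast
  have "L \<in> mingens n (SF n l (Jm n (private_bases B C v)))"
    using assms(6) colon_Jm_contract_bases[OF C(1) \<open>v \<in> C\<close>] C(2,4) \<open>v \<in> C\<close> by simp
  then obtain T where T: "T \<subseteq> {1..n}" "L = monomial_of_set T" "minimal_cover (private_bases B C v) l T"
    using mingens_SF_Jm_iff[OF An] by blast
  have "mmult L N = monomial_of_set (T \<union> C)"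
    using T(2) C(2) mmult_monomial_of_set minimal_cover_private_bases_disjoint[OF T(3)] by simp
  moreover have "minimal_cover B (l + 1) (T \<union> C)"
    using minimal_cover_private_bases_Un[OF assms(1) C(3,4) \<open>v \<in> C\<close> assms(5) T(3)] by simp
  ultimately show ?thesis using mingens_SF_Jm_iff[OF Bn] T(1) C(1) by blast
qed

end
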